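(* Let $k$ be a field and let $d,m$ be integers with $d$ even and $2 \le d < m-1$. Set $a=(d+2)/2$. Then \[ k[\Delta(d,m)] \cong k[x_1,\dots,x_m]/(I_{a,1,m-1},\, I_{a,2,m}), \] i.e. the Stanley–Reisner ideal of $\Delta(d,m)$ (with vertices labeled as below) is the ideal of $k[x_1,\dots,x_m]$ generated by $I_{a,1,m-1}$ and $I_{a,2,m}$.
   Context: For integers $2\le d<m$, fix real numbers $t_1<t_2<\dots<t_m$ and let $C_d(m)\subset\mathbb{R}^d$ be the cyclic polytope, the convex hull of the points $f(t_1),\dots,f(t_m)$ where $f(t)=(t,t^2,\dots,t^d)$. It is a simplicial $d$-polytope whose combinatorial type does not depend on the choice of the $t_i$. $\Delta(d,m)$ denotes its boundary simplicial complex on the vertex set $\{1,\dots,m\}$ (vertex $i$ corresponding to $f(t_i)$): its faces are the empty set and the vertex sets of proper faces of $C_d(m)$. For a simplicial complex $\Delta$ on $\{1,\dots,m\}$, its Stanley–Reisner ring is $k[\Delta]=k[x_1,\dots,x_m]/I_\Delta$, where $I_\Delta$ is generated by the squarefree monomials $\prod_{t\in W}x_t$ with $W\notin\Delta$. For positive integers $a,p,q$ with $p<q$ and $2a\le q-p+2$, $I_{a,p,q}$ denotes the ideal of $k[x_p,\dots,x_q]$ (and also its extension to any larger polynomial ring) generated by all monomials $x_{t_1}x_{t_2}\cdots x_{t_a}$ with $p\le t_1$, $t_a\le q$ and $t_j+2\le t_{j+1}$ for $1\le j\le a-1$. *)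

theory Defs
  imports "HOL-Analysis.Analysis" "HOL-Library.Poly_Mapping"
begin

text \<open>Moment curve in R^d. Coordinates of R^d are the elements of a finite type 'n,
  labelled 1..d by a bijection idx; coordinate number j of f(t) is t^j.\<close>
definition moment_curve :: "('n::finite \<Rightarrow> nat) \<Rightarrow> real \<Rightarrow> real ^ 'n" where
  "moment_curve idx s = (\<chi> i. s ^ idx i)"

definition cyclic_polytope :: "('n::finite \<Rightarrow> nat) \<Rightarrow> nat \<Rightarrow> (nat \<Rightarrow> real) \<Rightarrow> (real ^ 'n) set" where
  "cyclic_polytope idx m t = convex hull ((\<lambda>i. moment_curve idx (t i)) ` {1..m})"

definition cyclic_boundary_complex :: "('n::finite \<Rightarrow> nat) \<Rightarrow> nat \<Rightarrow> (nat \<Rightarrow> real) \<Rightarrow> nat set set" where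
  "cyclic_boundary_complex idx m t =
     {W. \<exists>F. F face_of cyclic_polytope idx m t \<and> F \<noteq> cyclic_polytope idx m t \<and>
            W = {i \<in> {1..m}. moment_curve idx (t i) \<in> F}}"

text \<open>Multivariate polynomials over k in variables x_i (i :: nat), as finitely supported
  maps from monomials (exponent vectors) to coefficients.\<close>
type_synonym 'k mpoly = "(nat \<Rightarrow>\<^sub>0 nat) \<Rightarrow>\<^sub>0 'k"

definition var :: "nat \<Rightarrow> 'k::comm_ring_1 mpoly" where
  "var i = Poly_Mapping.single (Poly_Mapping.single i 1) 1"

text \<open>The polynomial ring k[x_1,...,x_m] as the subset of polynomials involving only x_1..x_m.\<close>
definition poly_ring :: "nat \<Rightarrow> 'k::comm_ring_1 mpoly set" where
  "poly_ring m = {p :: 'k mpoly. \<forall>\<mu> \<in> Poly_Mapping.keys p. Poly_Mapping.keys \<mu> \<subseteq> {1..m}}"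

definition ideal_gen_in :: "'k::comm_ring_1 mpoly set \<Rightarrow> 'k mpoly set \<Rightarrow> 'k mpoly set" where
  "ideal_gen_in R S = {\<Sum>g\<in>G. c g * g | G c. finite G \<and> G \<subseteq> S \<and> (\<forall>g\<in>G. c g \<in> R)}"

definition sqfree_monomial :: "nat set \<Rightarrow> 'k::comm_ring_1 mpoly" where
  "sqfree_monomial W = (\<Prod>i\<in>W. var i)"

definition stanley_reisner_ideal :: "nat \<Rightarrow> nat set set \<Rightarrow> 'k::comm_ring_1 mpoly set" where
  "stanley_reisner_ideal m \<Delta> =
     ideal_gen_in (poly_ring m) {sqfree_monomial W | W. W \<subseteq> {1..m} \<and> W \<notin> \<Delta>}"

definition Igens :: "nat \<Rightarrow> nat \<Rightarrow> nat \<Rightarrow> 'k::comm_ring_1 mpoly set" where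
  "Igens a p q = {\<Prod>j\<in>{1..a}. var (s j) | s :: nat \<Rightarrow> nat.
      p \<le> s 1 \<and> s a \<le> q \<and> (\<forall>j\<in>{1..a-1}. s j + 2 \<le> s (j+1))}"

end

theory Submission
  imports Defs
begin

text \<open>A set W of vertices spans a proper face of C_d(m) exactly when some real polynomial h of degree
  at most d is nonnegative at t_1, ..., t_m and vanishes precisely at the t_j with j in W: the
  polynomial is b - c \<bullet> f(x) for a supporting hyperplane c \<bullet> x = b.

  If W contains indices s_1 < ... < s_a with gaps at least 2, all in [1, m-1] (or all in [2, m]),
  pairing every s_j with s_j + 1 (or s_j - 1) yields 2a points at which such an h alternates weakly
  in sign, so its degree is at least 2a - 1 > d and W is not a face.

  Conversely, for W a proper subset of [1, m] one multiplies linear factors: (x - t_1)...(x - t_L)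
  for the initial run {1..L} of W, then (x - t_p)(x - t_{p+1}) or (x - t_p)^2 for the least remaining
  p, and t_m - x for m. The degree is at most |A| + |B| for subsets A of W - {m} and B of W - {1}
  whose elements are pairwise at distance at least 2; if W contains no such set of size a, this
  is at most 2a - 2 = d and W is a face.\<close>

section \<open>Sign alternations force degree\<close>

lemma poly_root_between:
  fixes g :: "real poly"
  assumes "a \<le> b" "0 \<le> poly g a" "poly g b \<le> 0"
  obtains r where "a \<le> r" "r \<le> b" "poly g r = 0"
  using IVT2[of "poly g" b 0 a] assms by auto

lemma sign_past_root:
  fixes h :: "real poly"
  assumes "0 \<le> (-1)^Suc k * poly ([:-r, 1:] * h) x" "r < x"
  shows "0 \<le> (-1)^k * poly (-h) x"
proof -
  have "0 \<le> (x - r) * ((-1)^k * poly (-h) x)"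
    using assms(1) by (simp add: algebra_simps)
  then show ?thesis
    using assms(2) by (simp add: mult_le_0_iff)
qed

lemma sign_alternations_divide_root:
  fixes h :: "real poly"
  assumes incr: "\<forall>k<Suc K. y k < y (Suc k)"
    and alt: "\<forall>k\<le>Suc K. 0 \<le> (-1)^k * poly ([:-r, 1:] * h) (y k)"
    and r: "y 0 \<le> r" "r \<le> y 1"
  obtains z where "\<forall>k<K. z k < z (Suc k)" "\<forall>k\<le>K. 0 \<le> (-1)^k * poly (-h) (z k)"
proof -
  have incr_ivl: "y i < y j" if "i < j" "j \<le> Suc K" for i j
    using lift_Suc_mono_less_ivl[of "{..<Suc K}" y i j] incr that by force
  have past_root: "0 \<le> (-1)^k * poly (-h) (y (Suc k))" if "k \<le> K" "r < y (Suc k)" for k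
    using sign_past_root[of k r h] alt[rule_format, of "Suc k"] that by (metis Suc_le_mono)
  show thesis
  proof (cases "r < y 1")
    case True
    then have "r < y (Suc k)" if "k \<le> K" for k
      using incr_ivl[of 1 "Suc k"] that by (cases k) auto
    then show thesis
      using that[of "\<lambda>k. y (Suc k)"] incr past_root by simp
  next
    case False
    \<comment> \<open>the root is the sample point y 1, which is therefore skipped\<close>
    then have "r = y 1"
      using r by simp
    then have later: "r < y (Suc k)" if "0 < k" "k \<le> K" for k
      using incr_ivl that by auto
    have "y 0 < r"
      using \<open>r = y 1\<close> incr_ivl by auto
    moreover have "0 \<le> (y 0 - r) * poly h (y 0)"
      using alt[rule_format, of 0] by (simp add: algebra_simps)
    ultimately have "0 \<le> poly (-h) (y 0)"
      by (simp add: zero_le_mult_iff)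
    then show thesis
      using that[of "\<lambda>k. y (if k = 0 then 0 else Suc k)"] incr_ivl past_root later by auto
  qed
qed

lemma sign_alternations_le_degree:
  fixes g :: "real poly"
  assumes "g \<noteq> 0" "\<forall>k<K. y k < y (Suc k)" "\<forall>k\<le>K. 0 \<le> (-1)^k * poly g (y k)"
  shows "K \<le> degree g"
  using assms
proof (induction K arbitrary: g y)
  case 0
  then show ?case by simp
next
  case (Suc K)
  have "y 0 \<le> y 1" "0 \<le> poly g (y 0)" "poly g (y 1) \<le> 0"
    using Suc.prems(2)[rule_format, of 0] Suc.prems(3)[rule_format, of 0]
      Suc.prems(3)[rule_format, of 1] by auto
  then obtain r where r: "y 0 \<le> r" "r \<le> y 1" "poly g r = 0"
    by (rule poly_root_between)
  obtain h where g: "g = [:-r, 1:] * h"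
    using r(3) poly_eq_0_iff_dvd by (metis dvdE)
  have "h \<noteq> 0"
    using g Suc.prems(1) by auto
  then have deg: "degree g = Suc (degree h)"
    unfolding g by (subst degree_mult_eq) auto
  obtain z where "\<forall>k<K. z k < z (Suc k)" "\<forall>k\<le>K. 0 \<le> (-1)^k * poly (-h) (z k)"
    using sign_alternations_divide_root[of K y r h] Suc.prems(2,3) r(1,2) unfolding g by blast
  then have "K \<le> degree (-h)"
    using Suc.IH[of "-h" z] \<open>h \<noteq> 0\<close> by simp
  then show ?case
    using deg by simp
qed

section \<open>Pairs of sample points around sparse zeros\<close>

definition sparse_seq :: "nat \<Rightarrow> (nat \<Rightarrow> nat) \<Rightarrow> bool" where
  "sparse_seq a s \<longleftrightarrow> (\<forall>j\<in>{1..a-1}. s j + 2 \<le> s (j+1))"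

lemma sparse_seq_gap:
  assumes "sparse_seq a s" "1 \<le> i" "i \<le> j" "j \<le> a"
  shows "s i + 2 * (j - i) \<le> s j"
  using assms(3,4)
proof (induction j)
  case 0
  then show ?case by simp
next
  case (Suc j)
  show ?case
  proof (cases "i = Suc j")
    case False
    then have "s i + 2 * (j - i) \<le> s j" "s j + 2 \<le> s (Suc j)"
      using Suc assms(1,2) unfolding sparse_seq_def by auto
    then show ?thesis
      using False Suc.prems(1) by (simp add: Suc_diff_le)
  qed simp
qed

lemma sparse_seq_strict_mono:
  assumes "sparse_seq a s"
  shows "strict_mono_on {1..a} s"
proof (rule strict_mono_onI)
  fix i j assume "i \<in> {1..a}" "j \<in> {1..a}" "i < j"
  then have "s i + 2 * (j - i) \<le> s j"
    using sparse_seq_gap[OF assms] by simp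
  then show "s i < s j"
    using \<open>i < j\<close> by linarith
qed

lemma sparse_seq_image_subset:
  assumes "sparse_seq a s"
  shows "s ` {1..a} \<subseteq> {s 1..s a}"
  using strict_mono_on_leD[OF sparse_seq_strict_mono[OF assms]] by fastforce

lemma sparse_seq_paired_indices:
  assumes r: "sparse_seq a r" "1 \<le> a" "1 \<le> r 1" "r a < m" and k: "k \<le> 2 * a - 1"
  shows "r (k div 2 + 1) + k mod 2 \<in> {1..m}"
    and "k < 2 * a - 1 \<Longrightarrow> r (k div 2 + 1) + k mod 2 < r (Suc k div 2 + 1) + Suc k mod 2"
proof -
  have block: "k div 2 + 1 \<in> {1..a}"
    using k r(2) by auto
  then have "r 1 \<le> r (k div 2 + 1)" "r (k div 2 + 1) \<le> r a"
    using subsetD[OF sparse_seq_image_subset[OF r(1)], of "r (k div 2 + 1)"] by auto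
  then show "r (k div 2 + 1) + k mod 2 \<in> {1..m}"
    using r(3,4) by auto
  assume "k < 2 * a - 1"
  show "r (k div 2 + 1) + k mod 2 < r (Suc k div 2 + 1) + Suc k mod 2"
  proof (cases "even k")
    case False
    then have "k div 2 + 1 \<in> {1..a-1}"
      using \<open>k < 2 * a - 1\<close> by (auto elim!: oddE)
    then have "r (k div 2 + 1) + 2 \<le> r (k div 2 + 2)"
      using r(1) unfolding sparse_seq_def by auto
    then show ?thesis
      using False by (auto elim!: oddE)
  qed auto
qed

lemma paired_zeros_le_degree:
  fixes h :: "real poly" and r :: "nat \<Rightarrow> nat" and \<delta> :: nat
  assumes sm: "strict_mono_on {1..m} t" and "h \<noteq> 0"
    and nonneg: "\<forall>j\<in>{1..m}. 0 \<le> poly h (t j)"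
    and r: "sparse_seq a r" "1 \<le> a" "1 \<le> r 1" "r a < m"
    and zeros: "\<delta> \<le> 1" "\<forall>i\<in>{1..a}. poly h (t (r i + \<delta>)) = 0"
  shows "2 * a - 1 \<le> degree h"
proof -
  define K where "K = 2 * a - 1"
  \<comment> \<open>the sample indices r 1, r 1 + 1, r 2, r 2 + 1, ..., r a, r a + 1\<close>
  define e where "e k = r (k div 2 + 1) + k mod 2" for k
  note e = sparse_seq_paired_indices[OF r, folded K_def e_def]
  define g where "g = smult ((-1)^Suc \<delta>) h"
  have "K \<le> degree g"
  proof (rule sign_alternations_le_degree)
    show "g \<noteq> 0"
      using \<open>h \<noteq> 0\<close> by (simp add: g_def)
    show "\<forall>k<K. t (e k) < t (e (Suc k))"
      using e by (simp add: strict_mono_onD[OF sm])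
    show "\<forall>k\<le>K. 0 \<le> (-1)^k * poly g (t (e k))"
    proof (intro allI impI)
      fix k assume k: "k \<le> K"
      show "0 \<le> (-1)^k * poly g (t (e k))"
      proof (cases "k mod 2 = \<delta>")
        case True
        have "k div 2 + 1 \<in> {1..a}"
          using k r(2) unfolding K_def by auto
        then show ?thesis
          using True zeros(2) unfolding e_def g_def by simp
      next
        case False
        then have "even (k + Suc \<delta>)"
          using zeros(1) by presburger
        have "(-1)^k * poly g (t (e k)) = (-1)^(k + Suc \<delta>) * poly h (t (e k))"
          by (simp only: g_def poly_smult power_add mult.assoc)
        also have "\<dots> = poly h (t (e k))"
          using \<open>even (k + Suc \<delta>)\<close> by simp
        finally show ?thesis
          using nonneg e(1)[OF k] by simp
      qed
    qed
  qed
  then show ?thesis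
    using \<open>h \<noteq> 0\<close> by (simp add: K_def g_def)
qed

definition generator_seq :: "nat \<Rightarrow> nat \<Rightarrow> (nat \<Rightarrow> nat) \<Rightarrow> bool" where
  "generator_seq m a s \<longleftrightarrow> sparse_seq a s \<and> ((1 \<le> s 1 \<and> s a \<le> m - 1) \<or> (2 \<le> s 1 \<and> s a \<le> m))"

lemma generator_seq_zeros_le_degree:
  fixes h :: "real poly"
  assumes sm: "strict_mono_on {1..m} t" and "h \<noteq> 0" and "1 \<le> a"
    and nonneg: "\<forall>j\<in>{1..m}. 0 \<le> poly h (t j)"
    and s: "generator_seq m a s" and zeros: "\<forall>i\<in>{1..a}. poly h (t (s i)) = 0"
  shows "2 * a - 1 \<le> degree h"
proof -
  have sparse: "sparse_seq a s"
    using s unfolding generator_seq_def by blast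
  have mono: "s 1 \<le> s i" "s i \<le> s a" if "i \<in> {1..a}" for i
    using subsetD[OF sparse_seq_image_subset[OF sparse], of "s i"] that by auto
  consider "1 \<le> s 1" "s a \<le> m - 1" | "2 \<le> s 1" "s a \<le> m"
    using s unfolding generator_seq_def by blast
  then show ?thesis
  proof cases
    case 1
    then show ?thesis
      using zeros mono[of a] \<open>1 \<le> a\<close>
      by (intro paired_zeros_le_degree[OF sm \<open>h \<noteq> 0\<close> nonneg sparse \<open>1 \<le> a\<close>, of 0]) auto
  next
    case 2
    \<comment> \<open>shift every zero one step to the left, so that it becomes the right end of its pair\<close>
    have "s j - 1 + 2 \<le> s (j + 1) - 1" if "j \<in> {1..a-1}" for j
    proof -
      have "j \<in> {1..a}"
        using that by auto
      then have "2 \<le> s j" "s j + 2 \<le> s (j + 1)"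
        using mono(1)[of j] 2 that sparse unfolding sparse_seq_def by auto
      then show ?thesis
        by arith
    qed
    then have "sparse_seq a (\<lambda>i. s i - 1)"
      unfolding sparse_seq_def by blast
    moreover have "s i - 1 + 1 = s i" if "i \<in> {1..a}" for i
      using mono(1)[OF that] 2 by auto
    ultimately show ?thesis
      using 2 zeros mono[of a] \<open>1 \<le> a\<close>
      by (intro paired_zeros_le_degree[OF sm \<open>h \<noteq> 0\<close> nonneg, of a "\<lambda>i. s i - 1" 1]) auto
  qed
qed

section \<open>Faces of the cyclic polytope as zero sets of polynomials\<close>

definition supporting_poly :: "nat \<Rightarrow> (nat \<Rightarrow> real) \<Rightarrow> real poly \<Rightarrow> nat set \<Rightarrow> bool" where
  "supporting_poly m t h W \<longleftrightarrow> (\<forall>j\<in>{1..m}. 0 \<le> poly h (t j) \<and> (poly h (t j) = 0 \<longleftrightarrow> j \<in> W))"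

lemma moment_curve_functional_poly:
  fixes idx :: "'n::finite \<Rightarrow> nat" and c :: "real ^ 'n"
  assumes bij: "bij_betw idx UNIV {1..d}"
  obtains h where "degree h \<le> d" "\<And>s. c \<bullet> moment_curve idx s = b - poly h s"
proof
  define h where "h = [:b:] - (\<Sum>i\<in>UNIV. monom (c$i) (idx i))"
  show "c \<bullet> moment_curve idx s = b - poly h s" for s
    by (simp add: h_def poly_sum poly_monom moment_curve_def inner_vec_def)
  have "idx i \<le> d" for i
    using bij unfolding bij_betw_def by auto
  then have "degree (monom (c$i) (idx i)) \<le> d" for i
    using degree_monom_le order_trans by blast
  then show "degree h \<le> d"
    unfolding h_def by (intro degree_diff_le degree_sum_le) auto
qed

lemma poly_moment_curve_functional:
  fixes idx :: "'n::finite \<Rightarrow> nat" and h :: "real poly"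
  assumes bij: "bij_betw idx UNIV {1..d}" and deg: "degree h \<le> d"
  obtains c b where "\<And>s. c \<bullet> moment_curve idx s = b - poly h s"
proof
  fix s
  have "(\<chi> i. - coeff h (idx i)) \<bullet> moment_curve idx s = - (\<Sum>i\<in>UNIV. coeff h (idx i) * s ^ idx i)"
    by (simp add: moment_curve_def inner_vec_def sum_negf)
  also have "\<dots> = - (\<Sum>k\<in>{1..d}. coeff h k * s ^ k)"
    using sum.reindex_bij_betw[OF bij, of "\<lambda>k. coeff h k * s ^ k"] by simp
  also have "poly h s = (\<Sum>k\<le>d. coeff h k * s ^ k)"
    by (subst poly_as_sum_of_monoms'[OF deg, symmetric]) (simp add: poly_sum poly_monom)
  then have "(\<Sum>k\<in>{1..d}. coeff h k * s ^ k) = poly h s - coeff h 0"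
    by (simp add: atMost_atLeast0 sum.atLeast_Suc_atMost)
  finally show "(\<chi> i. - coeff h (idx i)) \<bullet> moment_curve idx s = coeff h 0 - poly h s"
    by simp
qed

lemma moment_curve_in_cyclic_polytope:
  "j \<in> {1..m} \<Longrightarrow> moment_curve idx (t j) \<in> cyclic_polytope idx m t"
  unfolding cyclic_polytope_def by (intro hull_inc) auto

lemma face_of_cyclic_polytope_supporting_poly:
  fixes idx :: "'n::finite \<Rightarrow> nat"
  assumes bij: "bij_betw idx UNIV {1..d}"
    and F: "F face_of cyclic_polytope idx m t" "F \<noteq> cyclic_polytope idx m t"
  obtains h where "degree h \<le> d"
    "supporting_poly m t h {i \<in> {1..m}. moment_curve idx (t i) \<in> F}"
proof (cases "F = {}")
  case True
  then show thesis
    using that[of 1] by (simp add: supporting_poly_def)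
next
  case False
  define P where "P = cyclic_polytope idx m t"
  have "polyhedron P"
    unfolding P_def cyclic_polytope_def by (simp add: polytope_imp_polyhedron polytope_convex_hull)
  then have "F exposed_face_of P"
    using F exposed_face_of_polyhedron unfolding P_def by blast
  then obtain c b where cb: "P \<subseteq> {x. c \<bullet> x \<le> b}" "F = P \<inter> {x. c \<bullet> x = b}"
    using False F unfolding exposed_face_of P_def by blast
  obtain h where "degree h \<le> d" and h: "\<And>s. c \<bullet> moment_curve idx s = b - poly h s"
    using moment_curve_functional_poly[OF bij] by blast
  note vertex = moment_curve_in_cyclic_polytope[of _ m idx t, folded P_def]
  have "0 \<le> poly h (t j)" if "j \<in> {1..m}" for j
    using cb(1) h[of "t j"] vertex[OF that] by fastforce
  then have "supporting_poly m t h {i \<in> {1..m}. moment_curve idx (t i) \<in> F}"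
    using cb h vertex unfolding supporting_poly_def by auto
  then show thesis
    using that \<open>degree h \<le> d\<close> by blast
qed

lemma cyclic_boundary_complexE:
  fixes idx :: "'n::finite \<Rightarrow> nat"
  assumes bij: "bij_betw idx UNIV {1..d}" and W: "W \<in> cyclic_boundary_complex idx m t"
  obtains h where "W \<subset> {1..m}" "degree h \<le> d" "supporting_poly m t h W"
proof -
  define P where "P = cyclic_polytope idx m t"
  obtain F where F: "F face_of P" "F \<noteq> P" and W_eq: "W = {i \<in> {1..m}. moment_curve idx (t i) \<in> F}"
    using W unfolding cyclic_boundary_complex_def P_def by blast
  have "W \<noteq> {1..m}"
  proof
    assume "W = {1..m}"
    then have "P \<subseteq> F"
      unfolding P_def cyclic_polytope_def using W_eq face_of_imp_convex[OF F(1)]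
      by (intro hull_minimal) auto
    then show False
      using F face_of_imp_subset by blast
  qed
  then show thesis
    using that face_of_cyclic_polytope_supporting_poly[OF bij F[unfolded P_def]] W_eq by blast
qed

lemma supporting_poly_in_cyclic_boundary_complex:
  fixes idx :: "'n::finite \<Rightarrow> nat" and h :: "real poly"
  assumes bij: "bij_betw idx UNIV {1..d}" and "degree h \<le> d"
    and h: "supporting_poly m t h W" and W: "W \<subset> {1..m}"
  shows "W \<in> cyclic_boundary_complex idx m t"
proof -
  obtain c b where cb: "\<And>s. c \<bullet> moment_curve idx s = b - poly h s"
    using poly_moment_curve_functional[OF bij \<open>degree h \<le> d\<close>] by blast
  define P where "P = cyclic_polytope idx m t"
  define F where "F = P \<inter> {x. c \<bullet> x = b}"
  note vertex = moment_curve_in_cyclic_polytope[of _ m idx t, folded P_def]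
  have "P \<subseteq> {x. c \<bullet> x \<le> b}"
    unfolding P_def cyclic_polytope_def
    using h cb by (intro hull_minimal) (auto simp: supporting_poly_def convex_halfspace_le)
  then have "F face_of P"
    unfolding F_def P_def cyclic_polytope_def
    by (intro face_of_Int_supporting_hyperplane_le) auto
  have in_F: "moment_curve idx (t j) \<in> F \<longleftrightarrow> j \<in> W" if "j \<in> {1..m}" for j
    using vertex[OF that] h that cb unfolding F_def supporting_poly_def by auto
  obtain j where "j \<in> {1..m}" "j \<notin> W"
    using W by blast
  then have "F \<noteq> P"
    using in_F vertex by blast
  moreover have "W = {i \<in> {1..m}. moment_curve idx (t i) \<in> F}"
    using in_F W by auto
  ultimately show ?thesis
    using \<open>F face_of P\<close> unfolding cyclic_boundary_complex_def P_def by blast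
qed

lemma generator_seq_not_in_cyclic_boundary_complex:
  fixes idx :: "'n::finite \<Rightarrow> nat"
  assumes bij: "bij_betw idx UNIV {1..d}" and sm: "strict_mono_on {1..m} t"
    and a: "d = 2 * a - 2" "1 \<le> a" and s: "generator_seq m a s"
  shows "s ` {1..a} \<notin> cyclic_boundary_complex idx m t"
proof
  assume "s ` {1..a} \<in> cyclic_boundary_complex idx m t"
  then obtain h where sub: "s ` {1..a} \<subset> {1..m}" and "degree h \<le> d"
    and h: "supporting_poly m t h (s ` {1..a})"
    using cyclic_boundary_complexE[OF bij] by blast
  have "h \<noteq> 0"
    using h sub unfolding supporting_poly_def by auto
  then have "2 * a - 1 \<le> degree h"
    using h sub unfolding supporting_poly_def
    by (intro generator_seq_zeros_le_degree[OF sm _ a(2) _ s]) auto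
  then show False
    using \<open>degree h \<le> d\<close> a by arith
qed

section \<open>Polynomials vanishing exactly on a vertex set\<close>

definition sparse :: "nat set \<Rightarrow> bool" where
  "sparse A \<longleftrightarrow> (\<forall>x\<in>A. \<forall>y\<in>A. x < y \<longrightarrow> x + 2 \<le> y)"

lemma sparse_Un:
  assumes "sparse A" "sparse B" "\<forall>x\<in>A. \<forall>y\<in>B. x + 2 \<le> y"
  shows "sparse (A \<union> B)"
  using assms unfolding sparse_def by (metis Un_iff add_leD1 leD le_less_trans)

definition face_certificate :: "nat \<Rightarrow> (nat \<Rightarrow> real) \<Rightarrow> nat set \<Rightarrow> real poly \<Rightarrow> nat set \<Rightarrow> nat set \<Rightarrow> bool" where
  "face_certificate m t W h A B \<longleftrightarrow> supporting_poly m t h W \<and> degree h \<le> card A + card B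
     \<and> finite A \<and> finite B \<and> A \<subseteq> W - {m} \<and> B \<subseteq> W - {1} \<and> sparse A \<and> sparse B"

lemma face_certificate_empty: "face_certificate m t {} 1 {} {}"
  by (simp add: face_certificate_def supporting_poly_def sparse_def)

lemma face_certificate_mult:
  assumes "face_certificate m t W1 h1 A1 B1" "face_certificate m t W2 h2 A2 B2" "W1 \<inter> W2 = {}"
    "\<forall>x\<in>A1. \<forall>y\<in>A2. x + 2 \<le> y" "\<forall>x\<in>B1. \<forall>y\<in>B2. x + 2 \<le> y"
  shows "face_certificate m t (W1 \<union> W2) (h1 * h2) (A1 \<union> A2) (B1 \<union> B2)"
proof -
  have "A1 \<inter> A2 = {}" "B1 \<inter> B2 = {}"
    using assms(4,5) by fastforce+
  then have "card A1 + card B1 + (card A2 + card B2) = card (A1 \<union> A2) + card (B1 \<union> B2)"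
    using assms(1,2) unfolding face_certificate_def by (simp add: card_Un_disjoint)
  moreover have "degree (h1 * h2) \<le> card A1 + card B1 + (card A2 + card B2)"
    using degree_mult_le[of h1 h2] assms(1,2) unfolding face_certificate_def by linarith
  moreover have "supporting_poly m t (h1 * h2) (W1 \<union> W2)"
    using assms(1,2) unfolding face_certificate_def supporting_poly_def by auto
  ultimately show ?thesis
    using assms sparse_Un unfolding face_certificate_def by auto
qed

lemma proper_subset_initial_run:
  fixes W :: "nat set"
  assumes "W \<subset> {1..m}"
  obtains L where "L < m" "{1..L} \<subseteq> W" "W - {1..L} \<subseteq> {L + 2..m}"
proof -
  define u where "u = Min ({1..m} - W)"
  have "{1..m} - W \<noteq> {}"
    using assms by blast
  then have u: "u \<in> {1..m} - W"
    unfolding u_def by (rule Min_in[rotated]) simp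
  have below_u: "j \<in> W" if "j \<in> {1..m}" "j < u" for j
    using Min_le[of "{1..m} - W" j] that unfolding u_def by fastforce
  show thesis
  proof (rule that[of "u - 1"])
    show "u - 1 < m" "{1..u - 1} \<subseteq> W"
      using u below_u by auto
    show "W - {1..u - 1} \<subseteq> {u - 1 + 2..m}"
    proof
      fix x assume "x \<in> W - {1..u - 1}"
      then have "x \<in> {1..m}" "x \<noteq> u" "u \<le> x" "1 \<le> u"
        using assms u by auto
      then show "x \<in> {u - 1 + 2..m}"
        by auto
    qed
  qed
qed

lemma least_adjacent_pair:
  fixes W :: "nat set"
  assumes "finite W" "W \<noteq> {}"
  obtains p q where "{p, q} \<subseteq> W" "q \<in> {p, Suc p}" "\<forall>x\<in>W - {p, q}. p + 2 \<le> x"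
proof -
  define p where "p = Min W"
  have p: "p \<in> W" "\<And>x. x \<in> W \<Longrightarrow> p \<le> x"
    using assms unfolding p_def by auto
  define q where "q = (if Suc p \<in> W then Suc p else p)"
  have "p + 2 \<le> x" if "x \<in> W - {p, q}" for x
    using p(2)[of x] that unfolding q_def by (cases "x = Suc p") auto
  then show thesis
    using that[of p q] p(1) unfolding q_def by auto
qed

context
  fixes m :: nat and t :: "nat \<Rightarrow> real"
  assumes sm: "strict_mono_on {1..m} t"
begin

lemma face_certificate_last:
  assumes "1 < m"
  shows "face_certificate m t {m} [:t m, -1:] {} {m}"
proof -
  have "0 \<le> t m - t j \<and> (t m - t j = 0 \<longleftrightarrow> j = m)" if "j \<in> {1..m}" for j
    using strict_mono_on_less_eq[OF sm that, of m] strict_mono_on_eq[OF sm that, of m] that assms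
    by auto
  then show ?thesis
    using assms by (auto simp: face_certificate_def supporting_poly_def sparse_def)
qed

lemma face_certificate_adjacent:
  assumes "2 \<le> p" "p < m" "q \<in> {p, Suc p}"
  shows "face_certificate m t {p, q} ([:-t p, 1:] * [:-t q, 1:]) {p} {p}"
proof -
  have pq: "p \<in> {1..m}" "q \<in> {1..m}" "p \<le> q"
    using assms by auto
  note le_iff = strict_mono_on_less_eq[OF sm]
  have "0 \<le> (t j - t p) * (t j - t q)" if "j \<in> {1..m}" for j
  proof (cases "j \<le> p")
    case True
    then have "t j \<le> t p" "t j \<le> t q"
      using le_iff that pq by auto
    then show ?thesis
      by (simp add: mult_nonpos_nonpos)
  next
    case False
    \<comment> \<open>no index lies strictly between p and q\<close>
    then have "q \<le> j"
      using assms(3) by auto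
    then have "t p \<le> t j" "t q \<le> t j"
      using le_iff that pq by auto
    then show ?thesis
      by simp
  qed
  moreover have "(t j - t p) * (t j - t q) = 0 \<longleftrightarrow> j \<in> {p, q}" if "j \<in> {1..m}" for j
    using strict_mono_on_eq[OF sm that pq(1)] strict_mono_on_eq[OF sm that pq(2)] by auto
  moreover have "poly ([:-t p, 1:] * [:-t q, 1:]) x = (x - t p) * (x - t q)" for x
    by (simp add: algebra_simps)
  ultimately have "supporting_poly m t ([:-t p, 1:] * [:-t q, 1:]) {p, q}"
    unfolding supporting_poly_def by presburger
  moreover have "degree ([:-t p, 1:] * [:-t q, 1:]) \<le> 2"
    using degree_mult_le[of "[:-t p, 1:]" "[:-t q, 1:]"] by simp
  ultimately show ?thesis
    using assms unfolding face_certificate_def sparse_def by auto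
qed

lemma face_certificate_insert_adjacent:
  assumes cert: "face_certificate m t W h A B" and W: "W \<subseteq> {p + 2..m}"
    and "2 \<le> p" "p < m" "q \<in> {p, Suc p}"
  shows "face_certificate m t ({p, q} \<union> W) ([:-t p, 1:] * [:-t q, 1:] * h) ({p} \<union> A) ({p} \<union> B)"
proof -
  have "A \<subseteq> W" "B \<subseteq> W"
    using cert unfolding face_certificate_def by auto
  then show ?thesis
    using W assms(3-5)
    by (intro face_certificate_mult[OF face_certificate_adjacent cert]) auto
qed

lemma face_certificate_initial:
  assumes "L < m"
  shows "face_certificate m t {1..L} (\<Prod>i\<in>{1..L}. [:-t i, 1:]) {i\<in>{1..L}. odd i} {i\<in>{1..L}. even i}"
proof -
  have "supporting_poly m t (\<Prod>i\<in>{1..L}. [:-t i, 1:]) {1..L}"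
    unfolding supporting_poly_def
  proof
    fix j assume j: "j \<in> {1..m}"
    define v where "v = (\<Prod>i\<in>{1..L}. t j - t i)"
    have "poly (\<Prod>i\<in>{1..L}. [:-t i, 1:]) (t j) = v"
      by (simp add: v_def poly_prod)
    moreover have "v = 0" if "j \<le> L"
      unfolding v_def using that j by (intro prod_zero) auto
    moreover have "0 < v" if "\<not> j \<le> L"
      unfolding v_def using that j assms strict_mono_on_less_eq[OF sm j] strict_mono_on_eq[OF sm j]
      by (intro prod_pos) (fastforce simp: less_le)
    ultimately show "0 \<le> poly (\<Prod>i\<in>{1..L}. [:-t i, 1:]) (t j) \<and>
        (poly (\<Prod>i\<in>{1..L}. [:-t i, 1:]) (t j) = 0 \<longleftrightarrow> j \<in> {1..L})"
      using j by (cases "j \<le> L") auto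
  qed
  moreover have "degree (\<Prod>i\<in>{1..L}. [:-t i, 1:]) \<le> L"
    using degree_prod_sum_le[of "{1..L}" "\<lambda>i. [:-t i, 1:]"] by simp
  moreover have "card {i\<in>{1..L}. odd i} + card {i\<in>{1..L}. even i} = L"
  proof -
    have "{i\<in>{1..L}. odd i} \<union> {i\<in>{1..L}. even i} = {1..L}"
      by auto
    then show ?thesis
      by (subst card_Un_disjoint[symmetric]) auto
  qed
  moreover have "sparse {i\<in>{1..L}. odd i}" "sparse {i\<in>{1..L}. even i}"
    unfolding sparse_def by (auto elim!: oddE evenE)
  ultimately show ?thesis
    using assms unfolding face_certificate_def by auto
qed

lemma face_certificate_tail:
  assumes "W \<subseteq> {2..m}"
  shows "\<exists>h A B. face_certificate m t W h A B"
  using assms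
proof (induction "card W" arbitrary: W rule: less_induct)
  case less
  show ?case
  proof (cases "W = {}")
    case True
    then show ?thesis
      using face_certificate_empty by blast
  next
    case False
    have "finite W"
      using less.prems finite_subset by blast
    then obtain p q where pq: "{p, q} \<subseteq> W" "q \<in> {p, Suc p}" and gap: "\<forall>x\<in>W - {p, q}. p + 2 \<le> x"
      using False by (rule least_adjacent_pair)
    have W': "W - {p, q} \<subseteq> {p + 2..m}"
      using gap less.prems by force
    show ?thesis
    proof (cases "p = m")
      case True
      then have "W - {p, q} = {}" "q = m"
        using W' pq less.prems by auto
      then have "W = {m}"
        using pq True by auto
      then show ?thesis
        using face_certificate_last less.prems by fastforce
    next
      case False
      have "card (W - {p, q}) < card W"
        using pq(1) \<open>finite W\<close> by (intro psubset_card_mono) auto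
      moreover have "W - {p, q} \<subseteq> {2..m}"
        using W' by auto
      ultimately obtain h A B where cert: "face_certificate m t (W - {p, q}) h A B"
        using less.hyps by blast
      have "2 \<le> p" "p < m"
        using False pq(1) less.prems by auto
      then have "face_certificate m t ({p, q} \<union> (W - {p, q})) ([:-t p, 1:] * [:-t q, 1:] * h)
          ({p} \<union> A) ({p} \<union> B)"
        using face_certificate_insert_adjacent[OF cert W'] pq(2) by blast
      moreover have "{p, q} \<union> (W - {p, q}) = W"
        using pq(1) by auto
      ultimately show ?thesis
        by metis
    qed
  qed
qed

lemma face_certificate_exists:
  assumes "W \<subset> {1..m}"
  shows "\<exists>h A B. face_certificate m t W h A B"
proof -
  obtain L where L: "L < m" "{1..L} \<subseteq> W" and W': "W - {1..L} \<subseteq> {L + 2..m}"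
    using proper_subset_initial_run[OF assms] by blast
  obtain h A B where cert: "face_certificate m t (W - {1..L}) h A B"
    using face_certificate_tail[of "W - {1..L}"] W' by fastforce
  have "A \<subseteq> W - {1..L}" "B \<subseteq> W - {1..L}"
    using cert unfolding face_certificate_def by auto
  then have "face_certificate m t ({1..L} \<union> (W - {1..L})) ((\<Prod>i\<in>{1..L}. [:-t i, 1:]) * h)
      ({i\<in>{1..L}. odd i} \<union> A) ({i\<in>{1..L}. even i} \<union> B)"
    using W' by (intro face_certificate_mult[OF face_certificate_initial[OF L(1)] cert]) auto
  moreover have "{1..L} \<union> (W - {1..L}) = W"
    using L(2) by auto
  ultimately show ?thesis
    by metis
qed

end

section \<open>Minimal nonfaces\<close>

lemma sparse_seq_from_sparse_set:
  assumes "finite A" "sparse A" "a \<le> card A" "1 \<le> a" "A \<subseteq> {p..q}"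
  obtains s where "sparse_seq a s" "p \<le> s 1" "s a \<le> q" "s ` {1..a} \<subseteq> A"
proof -
  define xs where "xs = sorted_list_of_set A"
  define s where "s j = xs ! (j - 1)" for j
  have len: "length xs = card A" and set: "set xs = A" and sorted: "sorted_wrt (<) xs"
    using assms(1) unfolding xs_def by auto
  have mem: "s j \<in> A" if "j \<in> {1..a}" for j
  proof -
    have "j - 1 < length xs"
      using that len assms(3) by auto
    then show ?thesis
      using set unfolding s_def by (metis nth_mem)
  qed
  have "sparse_seq a s"
    unfolding sparse_seq_def
  proof
    fix j assume j: "j \<in> {1..a-1}"
    have "s j < s (j + 1)"
      using sorted_wrt_nth_less[OF sorted, of "j - 1" j] j len assms(3) by (auto simp: s_def)
    then show "s j + 2 \<le> s (j + 1)"
      using assms(2) mem[of j] mem[of "j + 1"] j unfolding sparse_def by auto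
  qed
  moreover have "p \<le> s 1" "s a \<le> q"
    using mem[of 1] mem[of a] assms(4,5) by auto
  ultimately show thesis
    using that mem by blast
qed

lemma face_certificate_card_ge:
  fixes idx :: "'n::finite \<Rightarrow> nat"
  assumes bij: "bij_betw idx UNIV {1..d}" and "d = 2 * a - 2"
    and cert: "face_certificate m t W h A B"
    and W: "W \<subset> {1..m}" "W \<notin> cyclic_boundary_complex idx m t"
  shows "a \<le> card A \<or> a \<le> card B"
proof (rule ccontr)
  assume "\<not> (a \<le> card A \<or> a \<le> card B)"
  then have "degree h \<le> d"
    using cert \<open>d = 2 * a - 2\<close> unfolding face_certificate_def by linarith
  then have "W \<in> cyclic_boundary_complex idx m t"
    using cert W(1) unfolding face_certificate_def
    by (intro supporting_poly_in_cyclic_boundary_complex[OF bij]) auto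
  then show False
    using W(2) by blast
qed

lemma nonface_contains_generator_seq:
  fixes idx :: "'n::finite \<Rightarrow> nat"
  assumes bij: "bij_betw idx UNIV {1..d}" and sm: "strict_mono_on {1..m} t"
    and a: "d = 2 * a - 2" "2 * a \<le> m" "1 \<le> a"
    and W: "W \<subseteq> {1..m}" "W \<notin> cyclic_boundary_complex idx m t"
  obtains s where "generator_seq m a s" "s ` {1..a} \<subseteq> W"
proof (cases "W = {1..m}")
  case True
  have "generator_seq m a (\<lambda>j. 2 * j - 1)" "(\<lambda>j. 2 * j - 1) ` {1..a} \<subseteq> W"
    using True a(2) unfolding generator_seq_def sparse_seq_def by auto
  then show thesis
    using that by blast
next
  case False
  then obtain h A B where cert: "face_certificate m t W h A B"
    using face_certificate_exists[OF sm] W(1) by blast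
  then have A: "finite A" "sparse A" "A \<subseteq> {1..m - 1}" and B: "finite B" "sparse B" "B \<subseteq> {2..m}"
    using W(1) unfolding face_certificate_def by force+
  from face_certificate_card_ge[OF bij a(1) cert _ W(2)] False W(1)
  consider "a \<le> card A" | "a \<le> card B"
    by blast
  then show thesis
  proof cases
    case 1
    then obtain s where "sparse_seq a s" "1 \<le> s 1" "s a \<le> m - 1" "s ` {1..a} \<subseteq> A"
      using sparse_seq_from_sparse_set[OF A(1,2) _ a(3) A(3)] by blast
    then show thesis
      using that cert unfolding face_certificate_def generator_seq_def by blast
  next
    case 2
    then obtain s where "sparse_seq a s" "2 \<le> s 1" "s a \<le> m" "s ` {1..a} \<subseteq> B"
      using sparse_seq_from_sparse_set[OF B(1,2) _ a(3) B(3)] by blast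
    then show thesis
      using that cert unfolding face_certificate_def generator_seq_def by blast
  qed
qed

section \<open>Monomial ideals\<close>

lemma one_in_poly_ring: "1 \<in> poly_ring m"
  by (simp add: poly_ring_def)

lemma sum_in_poly_ring:
  "(\<And>i. i \<in> I \<Longrightarrow> f i \<in> poly_ring m) \<Longrightarrow> sum f I \<in> poly_ring m"
  using keys_sum[of f I] unfolding poly_ring_def by blast

lemma mult_in_poly_ring:
  assumes "p \<in> poly_ring m" "q \<in> poly_ring m"
  shows "p * q \<in> poly_ring m"
  unfolding poly_ring_def mem_Collect_eq
proof
  fix \<mu> assume "\<mu> \<in> Poly_Mapping.keys (p * q)"
  then obtain \<alpha> \<beta> where "\<mu> = \<alpha> + \<beta>" "\<alpha> \<in> Poly_Mapping.keys p" "\<beta> \<in> Poly_Mapping.keys q"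
    using keys_mult by blast
  then show "Poly_Mapping.keys \<mu> \<subseteq> {1..m}"
    using assms keys_add[of \<alpha> \<beta>] unfolding poly_ring_def by blast
qed

lemma sqfree_monomial_in_poly_ring:
  assumes "W \<subseteq> {1..m}"
  shows "(sqfree_monomial W :: 'k::comm_ring_1 mpoly) \<in> poly_ring m"
proof -
  have "finite W"
    using assms finite_subset by blast
  then show ?thesis
    using assms unfolding sqfree_monomial_def
  proof (induction W rule: finite_induct)
    case empty
    then show ?case
      by (simp add: one_in_poly_ring)
  next
    case (insert i W)
    then have "(var i :: 'k mpoly) \<in> poly_ring m"
      by (simp add: poly_ring_def var_def)
    moreover have "(prod var W :: 'k mpoly) \<in> poly_ring m"
      using insert by simp
    ultimately show ?case
      using insert.hyps by (simp add: mult_in_poly_ring)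
  qed
qed

lemma sqfree_monomial_split:
  assumes "finite W" "S \<subseteq> W"
  shows "sqfree_monomial W = sqfree_monomial (W - S) * sqfree_monomial S"
  unfolding sqfree_monomial_def using prod.subset_diff[OF assms(2,1)] by simp

lemma ideal_gen_in_mono: "S \<subseteq> T \<Longrightarrow> ideal_gen_in R S \<subseteq> ideal_gen_in R T"
  unfolding ideal_gen_in_def by blast

lemma ideal_gen_in_subsetI:
  fixes S T :: "'k::comm_ring_1 mpoly set"
  assumes "\<And>g. g \<in> S \<Longrightarrow> \<exists>r\<in>poly_ring m. \<exists>u\<in>T. g = r * u"
  shows "ideal_gen_in (poly_ring m) S \<subseteq> ideal_gen_in (poly_ring m) T"
proof
  fix x assume "x \<in> ideal_gen_in (poly_ring m) S"
  then obtain G c where x: "x = (\<Sum>g\<in>G. c g * g)" "finite G" "G \<subseteq> S" "\<forall>g\<in>G. c g \<in> poly_ring m"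
    unfolding ideal_gen_in_def by blast
  obtain r u where ru: "\<And>g. g \<in> S \<Longrightarrow> r g \<in> poly_ring m \<and> u g \<in> T \<and> g = r g * u g"
    using assms by metis
  define c' where "c' v = (\<Sum>g\<in>{g\<in>G. u g = v}. c g * r g)" for v
  \<comment> \<open>collect the generators of S according to the generator of T they are multiples of\<close>
  have "x = (\<Sum>g\<in>G. c g * r g * u g)"
    unfolding x(1) using ru x(3) by (intro sum.cong) (auto simp: mult.assoc)
  also have "\<dots> = (\<Sum>v\<in>u ` G. \<Sum>g\<in>{g\<in>G. u g = v}. c g * r g * u g)"
    by (rule sum.image_gen[OF x(2)])
  also have "\<dots> = (\<Sum>v\<in>u ` G. c' v * v)"
    unfolding c'_def sum_distrib_right by (intro sum.cong) auto
  finally have "x = (\<Sum>v\<in>u ` G. c' v * v)" .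
  moreover have "c' v \<in> poly_ring m" for v
    unfolding c'_def using ru x(3,4) by (intro sum_in_poly_ring mult_in_poly_ring) auto
  moreover have "u ` G \<subseteq> T"
    using ru x(3) by auto
  ultimately show "x \<in> ideal_gen_in (poly_ring m) T"
    unfolding ideal_gen_in_def using x(2) by blast
qed

lemma prod_var_sparse_seq:
  assumes "sparse_seq a s"
  shows "(\<Prod>j\<in>{1..a}. var (s j)) = sqfree_monomial (s ` {1..a})"
  using strict_mono_on_imp_inj_on[OF sparse_seq_strict_mono[OF assms]]
  by (simp add: sqfree_monomial_def prod.reindex)

lemma Igens_Un_eq:
  "Igens a 1 (m - 1) \<union> Igens a 2 m = {sqfree_monomial (s ` {1..a}) | s. generator_seq m a s}"
proof -
  have "Igens a p q = {sqfree_monomial (s ` {1..a}) | s. p \<le> s 1 \<and> s a \<le> q \<and> sparse_seq a s}" for p q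
    unfolding Igens_def sparse_seq_def[symmetric] by (rule Collect_cong) (metis prod_var_sparse_seq)
  then show ?thesis
    unfolding generator_seq_def by blast
qed

lemma nonface_monomial_multiple_of_generator:
  fixes idx :: "'n::finite \<Rightarrow> nat"
  assumes bij: "bij_betw idx UNIV {1..d}" and sm: "strict_mono_on {1..m} t"
    and a: "d = 2 * a - 2" "2 * a \<le> m" "1 \<le> a"
    and W: "W \<subseteq> {1..m}" "W \<notin> cyclic_boundary_complex idx m t"
  shows "\<exists>r\<in>poly_ring m. \<exists>u\<in>Igens a 1 (m - 1) \<union> Igens a 2 m. (sqfree_monomial W :: 'k::comm_ring_1 mpoly) = r * u"
proof -
  obtain s where s: "generator_seq m a s" "s ` {1..a} \<subseteq> W"
    using nonface_contains_generator_seq[OF bij sm a W] by blast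
  have "(sqfree_monomial W :: 'k mpoly) = sqfree_monomial (W - s ` {1..a}) * sqfree_monomial (s ` {1..a})"
    using W(1) s(2) by (intro sqfree_monomial_split) (auto intro: finite_subset)
  moreover have "sqfree_monomial (W - s ` {1..a}) \<in> poly_ring m"
    using W(1) by (intro sqfree_monomial_in_poly_ring) auto
  moreover have "sqfree_monomial (s ` {1..a}) \<in> Igens a 1 (m - 1) \<union> Igens a 2 m"
    using s(1) unfolding Igens_Un_eq by blast
  ultimately show ?thesis
    by blast
qed

lemma generators_subset_nonface_monomials:
  fixes idx :: "'n::finite \<Rightarrow> nat"
  assumes bij: "bij_betw idx UNIV {1..d}" and sm: "strict_mono_on {1..m} t"
    and a: "d = 2 * a - 2" "1 \<le> a"
  shows "Igens a 1 (m - 1) \<union> Igens a 2 m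
    \<subseteq> {sqfree_monomial W | W. W \<subseteq> {1..m} \<and> W \<notin> cyclic_boundary_complex idx m t}"
proof
  fix g assume "g \<in> Igens a 1 (m - 1) \<union> Igens a 2 m"
  then obtain s where s: "g = sqfree_monomial (s ` {1..a})" "generator_seq m a s"
    unfolding Igens_Un_eq by blast
  moreover have "s ` {1..a} \<subseteq> {1..m}"
    using s(2) sparse_seq_image_subset[of a s] unfolding generator_seq_def by fastforce
  ultimately show "g \<in> {sqfree_monomial W | W. W \<subseteq> {1..m} \<and> W \<notin> cyclic_boundary_complex idx m t}"
    using generator_seq_not_in_cyclic_boundary_complex[OF bij sm a s(2)] by blast
qed

theorem lemma3p1:
  fixes d m :: nat and t :: "nat \<Rightarrow> real" and idx :: "'n::finite \<Rightarrow> nat"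
  assumes "even d" and "2 \<le> d" and "d < m - 1"
    and "bij_betw idx (UNIV :: 'n set) {1..d}"
    and "strict_mono_on {1..m} t"
  shows "(stanley_reisner_ideal m (cyclic_boundary_complex idx m t) :: 'k::field mpoly set)
         = ideal_gen_in (poly_ring m) (Igens ((d+2) div 2) 1 (m-1) \<union> Igens ((d+2) div 2) 2 m)"
proof -
  note bij = assms(4) and sm = assms(5)
  define a where "a = (d + 2) div 2"
  have a: "d = 2 * a - 2" "2 * a \<le> m" "1 \<le> a"
    using assms(1-3) unfolding a_def by (auto elim!: evenE)
  have "stanley_reisner_ideal m (cyclic_boundary_complex idx m t)
      \<subseteq> ideal_gen_in (poly_ring m) (Igens a 1 (m - 1) \<union> Igens a 2 m :: 'k mpoly set)"
    unfolding stanley_reisner_ideal_def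
  proof (rule ideal_gen_in_subsetI)
    fix g :: "'k mpoly"
    assume "g \<in> {sqfree_monomial W | W. W \<subseteq> {1..m} \<and> W \<notin> cyclic_boundary_complex idx m t}"
    then show "\<exists>r\<in>poly_ring m. \<exists>u\<in>Igens a 1 (m - 1) \<union> Igens a 2 m. g = r * u"
      using nonface_monomial_multiple_of_generator[OF bij sm a] by blast
  qed
  moreover have "ideal_gen_in (poly_ring m) (Igens a 1 (m - 1) \<union> Igens a 2 m :: 'k mpoly set)
      \<subseteq> stanley_reisner_ideal m (cyclic_boundary_complex idx m t)"
    unfolding stanley_reisner_ideal_def
    using generators_subset_nonface_monomials[OF bij sm a(1,3)] by (rule ideal_gen_in_mono)
  ultimately show ?thesis
    unfolding a_def by blast
qed

end
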